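(* Let $G$ be the disjointness graph of a finite family of (possibly self-intersecting) $2$-way infinite polygonal $3$-chains in the plane. Then $\chi(G)\le \omega(G)^3+\omega(G)$.
   Context: A $2$-way infinite polygonal $3$-chain is a continuous curve in the plane consisting of a closed half-line, a straight-line segment, and a closed half-line, where the segment shares one endpoint with each half-line. The disjointness graph of a family of subsets of the plane has the members as vertices, two adjacent if and only if they are disjoint. $\chi(G)$ and $\omega(G)$ denote the chromatic number and clique number of $G$. *)

theory Defs
  imports "HOL-Analysis.Analysis"
begin

definition half_line :: "real^2 \<Rightarrow> real^2 \<Rightarrow> (real^2) set" where
  "half_line p d = {p + t *\<^sub>R d | t. t \<ge> 0}"

definition two_way_3chain :: "(real^2) set \<Rightarrow> bool" where
  "two_way_3chain C \<longleftrightarrow> (\<exists>a b u v. a \<noteq> b \<and> u \<noteq> 0 \<and> v \<noteq> 0 \<and>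
      C = half_line a u \<union> closed_segment a b \<union> half_line b v)"

definition chromatic_number :: "'a set \<Rightarrow> ('a \<Rightarrow> 'a \<Rightarrow> bool) \<Rightarrow> nat" where
  "chromatic_number V E = (LEAST k. \<exists>c :: 'a \<Rightarrow> nat.
      (\<forall>x\<in>V. c x < k) \<and> (\<forall>x\<in>V. \<forall>y\<in>V. x \<noteq> y \<and> E x y \<longrightarrow> c x \<noteq> c y))"

definition clique_number :: "'a set \<Rightarrow> ('a \<Rightarrow> 'a \<Rightarrow> bool) \<Rightarrow> nat" where
  "clique_number V E = Max {card K | K. K \<subseteq> V \<and> (\<forall>x\<in>K. \<forall>y\<in>K. x \<noteq> y \<longrightarrow> E x y)}"

definition disjointness_adj :: "'b set \<Rightarrow> 'b set \<Rightarrow> bool" where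
  "disjointness_adj A B \<longleftrightarrow> A \<inter> B = {}"

end

theory Submission
  imports Defs
begin

text \<open>Tilt the plane so that no piece of any chain is vertical. A chain whose first half-line
  goes to the left and whose last goes to the right is then compared with a disjoint one by the
  heights of their first half-lines far to the left; by Fashoda's theorem this order is
  transitive among pairwise disjoint chains. Every other chain is a lens: the union of the graphs
  of two continuous functions over a closed half-line of abscissae, meeting at its endpoint. Two
  disjoint lenses lie one above the other or are nested, which yields three strict orders that
  together compare all disjoint pairs. By Mirsky's theorem each order contributes a factor
  \<omega> to the number of colours, so \<omega> colours suffice for the first kind of chains and \<omega>^3
  for the lenses.\<close>

section \<open>Colourings from strict orders\<close>

definition proper_coloring :: "'a set \<Rightarrow> ('a \<Rightarrow> 'a \<Rightarrow> bool) \<Rightarrow> nat \<Rightarrow> ('a \<Rightarrow> nat) \<Rightarrow> bool" where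
  "proper_coloring V E k c \<longleftrightarrow>
     (\<forall>x\<in>V. c x < k) \<and> (\<forall>x\<in>V. \<forall>y\<in>V. x \<noteq> y \<and> E x y \<longrightarrow> c x \<noteq> c y)"

definition edge_order :: "'a set \<Rightarrow> ('a \<Rightarrow> 'a \<Rightarrow> bool) \<Rightarrow> ('a \<Rightarrow> 'a \<Rightarrow> bool) \<Rightarrow> bool" where
  "edge_order W E P \<longleftrightarrow> irreflp_on W P \<and> transp_on W P \<and> (\<forall>x\<in>W. \<forall>y\<in>W. P x y \<longrightarrow> E x y)"

lemma chromatic_number_le:
  assumes "proper_coloring V E k c"
  shows "chromatic_number V E \<le> k"
  unfolding chromatic_number_def
  by (rule Least_le, rule exI[of _ c]) (use assms in \<open>simp add: proper_coloring_def\<close>)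

lemma proper_coloring_mono: "proper_coloring V E k c \<Longrightarrow> k \<le> k' \<Longrightarrow> proper_coloring V E k' c"
  unfolding proper_coloring_def by (meson order_less_le_trans)

lemma proper_coloring_Un:
  assumes "proper_coloring W E k c" and "proper_coloring (V - W) E k' c'"
  shows "proper_coloring V E (k + k') (\<lambda>x. if x \<in> W then c x else k + c' x)"
  unfolding proper_coloring_def
proof (intro conjI ballI impI)
  fix x assume "x \<in> V"
  then show "(if x \<in> W then c x else k + c' x) < k + k'"
    using assms unfolding proper_coloring_def by (cases "x \<in> W") auto
next
  fix x y assume "x \<in> V" "y \<in> V" "x \<noteq> y \<and> E x y"
  then show "(if x \<in> W then c x else k + c' x) \<noteq> (if y \<in> W then c y else k + c' y)"
    using assms unfolding proper_coloring_def by (cases "x \<in> W"; cases "y \<in> W") force+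
qed

lemma proper_coloring_pullback:
  assumes c: "proper_coloring (g ` V) E k c" and inj: "inj_on g V"
    and E: "\<And>x y. x \<in> V \<Longrightarrow> y \<in> V \<Longrightarrow> E x y \<Longrightarrow> E (g x) (g y)"
  shows "proper_coloring V E k (c \<circ> g)"
  unfolding proper_coloring_def
proof (intro conjI ballI impI)
  fix x assume "x \<in> V"
  then show "(c \<circ> g) x < k" using c unfolding proper_coloring_def by simp
next
  fix x y assume xy: "x \<in> V" "y \<in> V" "x \<noteq> y \<and> E x y"
  then have "g x \<noteq> g y" using inj by (meson inj_onD)
  then show "(c \<circ> g) x \<noteq> (c \<circ> g) y"
    using c E xy unfolding proper_coloring_def by simp
qed

lemma card_le_clique_number:
  assumes "finite V" and "K \<subseteq> V" and "\<forall>x\<in>K. \<forall>y\<in>K. x \<noteq> y \<longrightarrow> E x y"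
  shows "card K \<le> clique_number V E"
proof -
  have "{card K | K. K \<subseteq> V \<and> (\<forall>x\<in>K. \<forall>y\<in>K. x \<noteq> y \<longrightarrow> E x y)} \<subseteq> card ` Pow V"
    by auto
  then have "finite {card K | K. K \<subseteq> V \<and> (\<forall>x\<in>K. \<forall>y\<in>K. x \<noteq> y \<longrightarrow> E x y)}"
    using assms(1) finite_subset by blast
  then show ?thesis
    unfolding clique_number_def by (rule Max_ge) (use assms in blast)
qed

lemma clique_number_image_le:
  assumes "finite V" and "inj_on f V"
    and "\<And>x y. x \<in> V \<Longrightarrow> y \<in> V \<Longrightarrow> E (f x) (f y) \<Longrightarrow> E x y"
  shows "clique_number (f ` V) E \<le> clique_number V E"
proof -
  let ?S = "{card K | K. K \<subseteq> f ` V \<and> (\<forall>x\<in>K. \<forall>y\<in>K. x \<noteq> y \<longrightarrow> E x y)}"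
  have "?S \<subseteq> card ` Pow (f ` V)" by auto
  then have fin: "finite ?S" using assms(1) finite_subset by blast
  have "k \<le> clique_number V E" if "k \<in> ?S" for k
  proof -
    have "\<exists>K'. k = card K' \<and> K' \<subseteq> f ` V \<and> (\<forall>x\<in>K'. \<forall>y\<in>K'. x \<noteq> y \<longrightarrow> E x y)"
      using that by simp
    then obtain K' where K': "k = card K'" "K' \<subseteq> f ` V" "\<forall>x\<in>K'. \<forall>y\<in>K'. x \<noteq> y \<longrightarrow> E x y"
      by (elim exE conjE)
    define K where "K = {x \<in> V. f x \<in> K'}"
    have KV: "K \<subseteq> V" unfolding K_def by blast
    have "f ` K = K'" unfolding K_def using K'(2) by blast
    then have "card K' = card K" using card_image inj_on_subset[OF assms(2) KV] by metis
    moreover have "card K \<le> clique_number V E"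
    proof (rule card_le_clique_number[OF assms(1) KV], intro ballI impI)
      fix x y assume xy: "x \<in> K" "y \<in> K" "x \<noteq> y"
      then have "f x \<noteq> f y" using inj_onD[OF assms(2)] KV by blast
      then have "E (f x) (f y)" using K'(3) xy unfolding K_def by blast
      then show "E x y" using assms(3) xy KV by blast
    qed
    ultimately show ?thesis using K'(1) by simp
  qed
  moreover have "?S \<noteq> {}" by auto
  ultimately show ?thesis unfolding clique_number_def[of "f ` V"] using fin by simp
qed

text \<open>Mirsky's argument: h x is one less than the size of a largest P-chain ending in x, and
  P-chains are cliques.\<close>
lemma order_height_exists:
  assumes fin: "finite V" and W: "W \<subseteq> V" and sym: "symp E" and P: "edge_order W E P"
  obtains h :: "'a \<Rightarrow> nat"
  where "\<forall>x\<in>W. h x < clique_number V E" and "\<forall>x\<in>W. \<forall>y\<in>W. P x y \<longrightarrow> h x < h y"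
proof -
  have irr: "\<And>x. x \<in> W \<Longrightarrow> \<not> P x x" and tr: "\<And>x y z. x \<in> W \<Longrightarrow> y \<in> W \<Longrightarrow> z \<in> W \<Longrightarrow>
      P x y \<Longrightarrow> P y z \<Longrightarrow> P x z" and adj: "\<And>x y. x \<in> W \<Longrightarrow> y \<in> W \<Longrightarrow> P x y \<Longrightarrow> E x y"
    using P unfolding edge_order_def by (auto dest: irreflp_onD transp_onD)
  define chains_to where "chains_to x = {S. S \<subseteq> W \<and> x \<in> S \<and> (\<forall>a\<in>S. a = x \<or> P a x) \<and>
      (\<forall>a\<in>S. \<forall>b\<in>S. a \<noteq> b \<longrightarrow> P a b \<or> P b a)}" for x
  define h where "h x = Max (card ` chains_to x) - 1" for x
  have finW: "finite W" using fin W finite_subset by blast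
  have fin_chains: "finite (card ` chains_to x)" for x
  proof -
    have "chains_to x \<subseteq> Pow W" unfolding chains_to_def by auto
    then show ?thesis using finW by (meson finite_Pow_iff finite_imageI finite_subset)
  qed
  have card_chain: "1 \<le> card S \<and> card S \<le> clique_number V E" if S: "S \<in> chains_to x" for S x
  proof
    have SW: "S \<subseteq> W" and "x \<in> S" using S unfolding chains_to_def by auto
    then show "1 \<le> card S" using finW by (auto simp: Suc_le_eq card_gt_0_iff intro: finite_subset)
    show "card S \<le> clique_number V E"
    proof (rule card_le_clique_number[OF fin], use SW W in blast, intro ballI impI)
      fix a b assume "a \<in> S" "b \<in> S" "a \<noteq> b"
      then have "P a b \<or> P b a" using S unfolding chains_to_def by blast
      then show "E a b" using adj sym SW \<open>a \<in> S\<close> \<open>b \<in> S\<close> by (blast dest: sympD)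
    qed
  qed
  have longest: "\<exists>S\<in>chains_to x. Max (card ` chains_to x) = card S" if "x \<in> W" for x
  proof -
    have "{x} \<in> chains_to x" using that unfolding chains_to_def by auto
    then show ?thesis using Max_in[OF fin_chains] by fastforce
  qed
  have "h x < clique_number V E" if "x \<in> W" for x
    using longest[OF that] card_chain unfolding h_def by fastforce
  moreover have "h x < h y" if x: "x \<in> W" and y: "y \<in> W" and "P x y" for x y
  proof -
    obtain S where S: "S \<in> chains_to x" "Max (card ` chains_to x) = card S"
      using longest[OF x] by blast
    have SW: "S \<subseteq> W" and below_x: "\<forall>a\<in>S. a = x \<or> P a x" using S(1) unfolding chains_to_def by auto
    have "y \<notin> S" using below_x irr[OF x] irr[OF y] \<open>P x y\<close> tr[OF x y x] by auto
    have "P a y" if "a \<in> S" for a using below_x \<open>P x y\<close> tr[OF _ x y] SW that by (metis subsetD)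
    then have "insert y S \<in> chains_to y" using S(1) y unfolding chains_to_def by auto
    then have "card (insert y S) \<le> Max (card ` chains_to y)" using Max_ge[OF fin_chains] by blast
    moreover have "card (insert y S) = card S + 1"
      using \<open>y \<notin> S\<close> SW finW by (simp add: finite_subset)
    ultimately show ?thesis unfolding h_def using S(2) card_chain[OF S(1)] by linarith
  qed
  ultimately show ?thesis using that by blast
qed

lemma proper_coloring_by_order:
  assumes "finite V" "W \<subseteq> V" "symp E" and P: "edge_order W E P"
    and cover: "\<And>x y. x \<in> W \<Longrightarrow> y \<in> W \<Longrightarrow> x \<noteq> y \<Longrightarrow> E x y \<Longrightarrow> P x y \<or> P y x"
  shows "\<exists>c. proper_coloring W E (clique_number V E) c"
proof -
  obtain h where "\<forall>x\<in>W. h x < clique_number V E" "\<forall>x\<in>W. \<forall>y\<in>W. P x y \<longrightarrow> h x < h y"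
    using order_height_exists[OF assms(1-3) P] by blast
  then have "proper_coloring W E (clique_number V E) h"
    unfolding proper_coloring_def using cover by fastforce
  then show ?thesis by blast
qed

lemma radix_less: "(a::nat) < n \<Longrightarrow> b < m \<Longrightarrow> a + n * b < n * m"
proof -
  assume "a < n" "b < m"
  then have "a + n * b < n * (b + 1)" by simp
  also have "\<dots> \<le> n * m" using \<open>b < m\<close> by (intro mult_le_mono2) simp
  finally show ?thesis .
qed

lemma radix_inj:
  assumes "(a::nat) < n" "a' < n" "a + n * b = a' + n * b'"
  shows "a = a' \<and> b = b'"
proof -
  have "a = (a + n * b) mod n" "a' = (a' + n * b') mod n" using assms(1,2) by simp_all
  then have "a = a'" using assms(3) by simp
  moreover have "n > 0" using assms(1) by simp
  ultimately show ?thesis using assms(3) by simp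
qed

lemma proper_coloring_by_three_orders:
  assumes "finite V" "W \<subseteq> V" "symp E"
    and P: "edge_order W E P1" "edge_order W E P2" "edge_order W E P3"
    and cover: "\<And>x y. x \<in> W \<Longrightarrow> y \<in> W \<Longrightarrow> x \<noteq> y \<Longrightarrow> E x y \<Longrightarrow>
        P1 x y \<or> P1 y x \<or> P2 x y \<or> P2 y x \<or> P3 x y \<or> P3 y x"
  shows "\<exists>c. proper_coloring W E (clique_number V E ^ 3) c"
proof -
  let ?w = "clique_number V E"
  obtain h1 where h1: "\<forall>x\<in>W. h1 x < ?w" "\<forall>x\<in>W. \<forall>y\<in>W. P1 x y \<longrightarrow> h1 x < h1 y"
    using order_height_exists[OF assms(1-3) P(1)] by blast
  obtain h2 where h2: "\<forall>x\<in>W. h2 x < ?w" "\<forall>x\<in>W. \<forall>y\<in>W. P2 x y \<longrightarrow> h2 x < h2 y"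
    using order_height_exists[OF assms(1-3) P(2)] by blast
  obtain h3 where h3: "\<forall>x\<in>W. h3 x < ?w" "\<forall>x\<in>W. \<forall>y\<in>W. P3 x y \<longrightarrow> h3 x < h3 y"
    using order_height_exists[OF assms(1-3) P(3)] by blast
  define c where "c x = h1 x + ?w * (h2 x + ?w * h3 x)" for x
  have "c x < ?w ^ 3" if "x \<in> W" for x
  proof -
    have "h2 x + ?w * h3 x < ?w * ?w" using radix_less h2(1) h3(1) that by blast
    then have "c x < ?w * (?w * ?w)" unfolding c_def using radix_less h1(1) that by blast
    then show ?thesis by (simp add: power3_eq_cube)
  qed
  moreover have "c x \<noteq> c y" if "x \<in> W" "y \<in> W" "x \<noteq> y" "E x y" for x y
  proof
    assume "c x = c y"
    then have "h1 x + ?w * (h2 x + ?w * h3 x) = h1 y + ?w * (h2 y + ?w * h3 y)"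
      unfolding c_def .
    then have "h1 x = h1 y" and "h2 x + ?w * h3 x = h2 y + ?w * h3 y"
      using radix_inj h1(1) that(1,2) by metis+
    then have "h1 x = h1 y" "h2 x = h2 y" "h3 x = h3 y"
      using radix_inj h2(1) that(1,2) by metis+
    then show False
      using cover[OF that] h1(2) h2(2) h3(2) that(1,2) by (metis less_irrefl)
  qed
  ultimately have "proper_coloring W E (?w ^ 3) c" unfolding proper_coloring_def by blast
  then show ?thesis by blast
qed

section \<open>Lenses\<close>

lemma continuous_nonvanishing_neg_on_interval:
  fixes g :: "real \<Rightarrow> real"
  assumes cont: "continuous_on S g" and S: "is_interval S"
    and z: "z \<in> S" "g z < 0" and nz: "\<And>x. x \<in> S \<Longrightarrow> g x \<noteq> 0" and x: "x \<in> S"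
  shows "g x < 0"
proof (rule ccontr)
  assume "\<not> g x < 0"
  then have gx: "g x > 0" using nz[OF x] by linarith
  have between: "{a..b} \<subseteq> S" if "a \<in> S" "b \<in> S" for a b
    using S that unfolding is_interval_1 by (meson atLeastAtMost_iff subsetI)
  then have c: "continuous_on {a..b} g" if "a \<in> S" "b \<in> S" for a b
    using cont continuous_on_subset that by blast
  show False
  proof (cases "z \<le> x")
    case True
    obtain y where "z \<le> y" "y \<le> x" "g y = 0" using IVT'[of g z 0 x] z gx True c[OF z(1) x] by force
    then show False using nz between[OF z(1) x] by auto
  next
    case False
    obtain y where "x \<le> y" "y \<le> z" "g y = 0"
      using IVT2'[of g z 0 x] z gx False c[OF x z(1)] by force
    then show False using nz between[OF x z(1)] by auto
  qed
qed

record lens =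
  opens_left :: bool
  apex :: real
  branch1 :: "real \<Rightarrow> real"
  branch2 :: "real \<Rightarrow> real"

definition lens_dom :: "lens \<Rightarrow> real set" where
  "lens_dom l = (if opens_left l then {..apex l} else {apex l..})"

definition lens_set :: "lens \<Rightarrow> (real^2) set" where
  "lens_set l = {p. p$1 \<in> lens_dom l \<and> (p$2 = branch1 l (p$1) \<or> p$2 = branch2 l (p$1))}"

definition wf_lens :: "lens \<Rightarrow> bool" where
  "wf_lens l \<longleftrightarrow> continuous_on UNIV (branch1 l) \<and> continuous_on UNIV (branch2 l) \<and>
     branch1 l (apex l) = branch2 l (apex l)"

definition lens_lo :: "lens \<Rightarrow> real \<Rightarrow> real" where
  "lens_lo l x = min (branch1 l x) (branch2 l x)"

definition lens_hi :: "lens \<Rightarrow> real \<Rightarrow> real" where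
  "lens_hi l x = max (branch1 l x) (branch2 l x)"

definition lens_below :: "lens \<Rightarrow> lens \<Rightarrow> bool" where
  "lens_below l m \<longleftrightarrow> (\<forall>x \<in> lens_dom l \<inter> lens_dom m. lens_hi l x < lens_lo m x)"

definition lens_nested :: "lens \<Rightarrow> lens \<Rightarrow> bool" where
  "lens_nested l m \<longleftrightarrow> lens_dom l \<subseteq> lens_dom m \<and>
     (\<forall>x\<in>lens_dom l. lens_lo m x < lens_lo l x \<and> lens_hi l x < lens_hi m x)"

definition lens_precedes :: "lens \<Rightarrow> lens \<Rightarrow> bool" where
  "lens_precedes l m \<longleftrightarrow>
     (opens_left l = opens_left m \<and> apex m \<le> apex l) \<or> (\<not> opens_left l \<and> opens_left m)"

lemma apex_in_lens_dom: "apex l \<in> lens_dom l"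
  unfolding lens_dom_def by auto

lemma lens_lo_le_hi: "lens_lo l x \<le> lens_hi l x"
  unfolding lens_lo_def lens_hi_def by auto

lemma lens_set_bounds:
  "p \<in> lens_set l \<Longrightarrow> p$1 \<in> lens_dom l \<and> lens_lo l (p$1) \<le> p$2 \<and> p$2 \<le> lens_hi l (p$1) \<and>
     (p$2 = lens_lo l (p$1) \<or> p$2 = lens_hi l (p$1))"
  unfolding lens_set_def lens_lo_def lens_hi_def by auto

lemma lens_below_disjoint:
  assumes "lens_below l m"
  shows "lens_set l \<inter> lens_set m = {}"
proof -
  have False if p: "p \<in> lens_set l" "p \<in> lens_set m" for p
  proof -
    have "p$1 \<in> lens_dom l \<inter> lens_dom m" using lens_set_bounds p by blast
    then have "lens_hi l (p$1) < lens_lo m (p$1)" using assms unfolding lens_below_def by blast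
    then show False using lens_set_bounds[OF p(1)] lens_set_bounds[OF p(2)] by linarith
  qed
  then show ?thesis by blast
qed

lemma lens_nested_disjoint:
  assumes "lens_nested l m"
  shows "lens_set l \<inter> lens_set m = {}"
proof -
  have False if p: "p \<in> lens_set l" "p \<in> lens_set m" for p
  proof -
    have "p$1 \<in> lens_dom l" using lens_set_bounds p by blast
    then have "lens_lo m (p$1) < lens_lo l (p$1) \<and> lens_hi l (p$1) < lens_hi m (p$1)"
      using assms unfolding lens_nested_def by blast
    then show False using lens_set_bounds[OF p(1)] lens_set_bounds[OF p(2)] by linarith
  qed
  then show ?thesis by blast
qed

lemma lens_below_irrefl: "\<not> lens_below l l"
  unfolding lens_below_def using apex_in_lens_dom[of l] lens_lo_le_hi[of l "apex l"] by force

lemma lens_nested_irrefl: "\<not> lens_nested l l"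
  unfolding lens_nested_def using apex_in_lens_dom[of l] by force

lemma lens_precedes_total: "lens_precedes l m \<or> lens_precedes m l"
  unfolding lens_precedes_def by auto

lemma lens_precedes_trans:
  "lens_precedes l m \<Longrightarrow> lens_precedes m n \<Longrightarrow>
     lens_precedes l n \<and> lens_dom l \<inter> lens_dom n \<subseteq> lens_dom m"
  unfolding lens_precedes_def lens_dom_def by (auto split: if_splits)

lemma lens_below_trans:
  assumes "lens_below l m" "lens_below m n" "lens_precedes l m" "lens_precedes m n"
  shows "lens_below l n"
  unfolding lens_below_def
proof
  fix x assume x: "x \<in> lens_dom l \<inter> lens_dom n"
  then have "x \<in> lens_dom m" using lens_precedes_trans[OF assms(3,4)] by blast
  then show "lens_hi l x < lens_lo n x"
    using assms(1,2) x lens_lo_le_hi[of m x] unfolding lens_below_def by force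
qed

lemma lens_below_trans':
  assumes "lens_below m l" "lens_below n m" "lens_precedes l m" "lens_precedes m n"
  shows "lens_below n l"
  unfolding lens_below_def
proof
  fix x assume x: "x \<in> lens_dom n \<inter> lens_dom l"
  then have "x \<in> lens_dom m" using lens_precedes_trans[OF assms(3,4)] by blast
  then show "lens_hi n x < lens_lo l x"
    using assms(1,2) x lens_lo_le_hi[of m x] unfolding lens_below_def by force
qed

lemma lens_nested_trans: "lens_nested l m \<Longrightarrow> lens_nested m n \<Longrightarrow> lens_nested l n"
  unfolding lens_nested_def by (meson order_trans subsetD order.strict_trans)

lemma is_interval_lens_dom_Int: "is_interval (lens_dom l \<inter> lens_dom m)"
  unfolding is_interval_1 lens_dom_def by (auto split: if_splits)

lemma apex_in_lens_dom_Int: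
  "lens_dom l \<inter> lens_dom m \<noteq> {} \<Longrightarrow>
     apex l \<in> lens_dom l \<inter> lens_dom m \<or> apex m \<in> lens_dom l \<inter> lens_dom m"
  unfolding lens_dom_def by (auto split: if_splits)

lemma lens_dom_subset:
  "apex l \<in> lens_dom m \<Longrightarrow> apex m \<notin> lens_dom l \<inter> lens_dom m \<Longrightarrow> lens_dom l \<subseteq> lens_dom m"
  unfolding lens_dom_def by (auto split: if_splits)

lemma continuous_lens_lo: "wf_lens l \<Longrightarrow> continuous_on UNIV (lens_lo l)"
  unfolding wf_lens_def lens_lo_def by (auto intro!: continuous_intros)

lemma continuous_lens_hi: "wf_lens l \<Longrightarrow> continuous_on UNIV (lens_hi l)"
  unfolding wf_lens_def lens_hi_def by (auto intro!: continuous_intros)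

lemma lens_lo_eq_hi_apex: "wf_lens l \<Longrightarrow> lens_lo l (apex l) = lens_hi l (apex l)"
  unfolding wf_lens_def lens_lo_def lens_hi_def by simp

lemma disjoint_lens_values:
  assumes "lens_set l \<inter> lens_set m = {}" "x \<in> lens_dom l \<inter> lens_dom m"
  shows "lens_lo l x \<noteq> lens_lo m x \<and> lens_lo l x \<noteq> lens_hi m x \<and>
    lens_hi l x \<noteq> lens_lo m x \<and> lens_hi l x \<noteq> lens_hi m x"
proof -
  have "vector [x, lens_lo n x] \<in> lens_set n" "vector [x, lens_hi n x] \<in> lens_set n"
    if "x \<in> lens_dom n" for n
    using that unfolding lens_set_def lens_lo_def lens_hi_def by (auto simp: min_def max_def)
  then show ?thesis using assms by (metis IntD1 IntD2 disjoint_iff)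
qed

text \<open>Along the common domain, which is an interval containing the apex of l, the
  relative position of the four branches cannot change without the lenses meeting.\<close>
lemma disjoint_lenses_cases_apex:
  assumes ok: "wf_lens l" "wf_lens m" and dj: "lens_set l \<inter> lens_set m = {}"
    and k: "apex l \<in> lens_dom l \<inter> lens_dom m"
  shows "lens_below l m \<or> lens_below m l \<or> lens_nested l m"
proof -
  let ?J = "lens_dom l \<inter> lens_dom m" and ?z = "apex l"
  note dv = disjoint_lens_values[OF dj]
  have neg_on_J: "f1 x - f2 x < 0"
    if "continuous_on UNIV f1" "continuous_on UNIV f2" "f1 ?z < f2 ?z"
      "\<And>x. x \<in> ?J \<Longrightarrow> f1 x \<noteq> f2 x" "x \<in> ?J" for f1 f2 :: "real \<Rightarrow> real" and x
    by (rule continuous_nonvanishing_neg_on_interval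
        [where g="\<lambda>x. f1 x - f2 x" and S="?J" and z="?z"])
      (use that k is_interval_lens_dom_Int continuous_on_subset[OF _ subset_UNIV] in
        \<open>auto intro!: continuous_intros\<close>)
  have cl: "continuous_on UNIV (lens_lo l)" "continuous_on UNIV (lens_hi l)"
    "continuous_on UNIV (lens_lo m)" "continuous_on UNIV (lens_hi m)"
    using continuous_lens_lo continuous_lens_hi ok by auto
  consider "lens_hi l ?z < lens_lo m ?z" | "lens_hi m ?z < lens_lo l ?z"
    | "lens_lo m ?z < lens_lo l ?z" "lens_hi l ?z < lens_hi m ?z"
    using lens_lo_eq_hi_apex[OF ok(1)] lens_lo_le_hi[of m ?z] dv[OF k] by linarith
  then show ?thesis
  proof cases
    case 1
    then have "lens_below l m" unfolding lens_below_def using neg_on_J[OF cl(2,3)] dv by force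
    then show ?thesis by simp
  next
    case 2
    then have "lens_below m l" unfolding lens_below_def using neg_on_J[OF cl(4,1)] dv by force
    then show ?thesis by simp
  next
    case 3
    have lo: "lens_lo m x < lens_lo l x" if "x \<in> ?J" for x
      using neg_on_J[OF cl(3,1) 3(1)] dv that by force
    have hi: "lens_hi l x < lens_hi m x" if "x \<in> ?J" for x
      using neg_on_J[OF cl(2,4) 3(2)] dv that by force
    have "apex m \<notin> ?J"
      using lo hi lens_lo_eq_hi_apex[OF ok(2)] lens_lo_le_hi[of l "apex m"] by force
    then have "lens_dom l \<subseteq> lens_dom m" using lens_dom_subset k by blast
    then have "lens_nested l m" unfolding lens_nested_def using lo hi by blast
    then show ?thesis by simp
  qed
qed

lemma disjoint_lenses_cases:
  assumes "wf_lens l" "wf_lens m" and "lens_set l \<inter> lens_set m = {}"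
  shows "lens_below l m \<or> lens_below m l \<or> lens_nested l m \<or> lens_nested m l"
proof (cases "lens_dom l \<inter> lens_dom m = {}")
  case True
  then show ?thesis unfolding lens_below_def by auto
next
  case False
  then show ?thesis
    using apex_in_lens_dom_Int disjoint_lenses_cases_apex[OF assms]
      disjoint_lenses_cases_apex[OF assms(2,1)] assms(3) by (metis Int_commute)
qed

section \<open>Chains as graphs\<close>

definition chain :: "real^2 \<Rightarrow> real^2 \<Rightarrow> real^2 \<Rightarrow> real^2 \<Rightarrow> (real^2) set" where
  "chain a b u v = half_line a u \<union> closed_segment a b \<union> half_line b v"

abbreviation pt :: "real \<Rightarrow> real \<Rightarrow> real^2" where
  "pt x y \<equiv> vector [x, y]"

definition line_at :: "real^2 \<Rightarrow> real^2 \<Rightarrow> real \<Rightarrow> real" where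
  "line_at a w x = a$2 + (x - a$1) * (w$2 / w$1)"

lemma chain_swap: "chain a b u v = chain b a v u"
  unfolding chain_def by (auto simp: closed_segment_commute)

lemma chain_subsets:
  "half_line a u \<subseteq> chain a b u v" "closed_segment a b \<subseteq> chain a b u v"
  "half_line b v \<subseteq> chain a b u v"
  unfolding chain_def by auto

lemma line_at_base [simp]: "line_at a w (a$1) = a$2"
  unfolding line_at_def by simp

lemma line_at_continuous: "continuous_on S (line_at a w)"
  unfolding line_at_def by (intro continuous_intros)

lemma line_at_same_line: "a$1 \<noteq> b$1 \<Longrightarrow> line_at b (a - b) x = line_at a (a - b) x"
  unfolding line_at_def by (simp add: field_simps)

lemma vec2_eq_iff: "(p::real^2) = q \<longleftrightarrow> p$1 = q$1 \<and> p$2 = q$2"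
  by (simp add: vec_eq_iff forall_2)

lemma base_in_half_line: "a \<in> half_line a u"
  unfolding half_line_def by (auto intro: exI[of _ 0])

lemma convex_half_line: "convex (half_line a u)"
proof (rule convexI)
  fix x y :: "real^2" and s t :: real
  assume "x \<in> half_line a u" "y \<in> half_line a u" and st: "0 \<le> s" "0 \<le> t" "s + t = 1"
  then obtain t1 t2 where t: "t1 \<ge> 0" "x = a + t1 *\<^sub>R u" "t2 \<ge> 0" "y = a + t2 *\<^sub>R u"
    unfolding half_line_def by auto
  have "s *\<^sub>R x + t *\<^sub>R y = (s + t) *\<^sub>R a + (s * t1 + t * t2) *\<^sub>R u"
    unfolding t by (simp add: algebra_simps)
  then have "s *\<^sub>R x + t *\<^sub>R y = a + (s * t1 + t * t2) *\<^sub>R u" using st by simp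
  moreover have "s * t1 + t * t2 \<ge> 0" using st t by simp
  ultimately show "s *\<^sub>R x + t *\<^sub>R y \<in> half_line a u" unfolding half_line_def by blast
qed

lemma half_line_graph_neg:
  assumes "u$1 < 0"
  shows "half_line a u = {p. p$1 \<le> a$1 \<and> p$2 = line_at a u (p$1)}"
proof (intro set_eqI iffI)
  fix p assume "p \<in> half_line a u"
  then obtain t where t: "t \<ge> 0" "p = a + t *\<^sub>R u" unfolding half_line_def by auto
  have "t * u$1 \<le> 0" using t(1) assms by (simp add: mult_nonneg_nonpos)
  moreover have "a$2 + t * u$2 = a$2 + (t * u$1) * (u$2 / u$1)" using assms by simp
  ultimately show "p \<in> {p. p$1 \<le> a$1 \<and> p$2 = line_at a u (p$1)}"
    using t unfolding line_at_def by simp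
next
  fix p :: "real^2" assume p: "p \<in> {p. p$1 \<le> a$1 \<and> p$2 = line_at a u (p$1)}"
  define t where "t = (p$1 - a$1) / u$1"
  have "t \<ge> 0" unfolding t_def using p assms by (simp add: divide_nonpos_neg)
  moreover have "p = a + t *\<^sub>R u"
    unfolding vec2_eq_iff t_def using p assms by (simp add: line_at_def field_simps)
  ultimately show "p \<in> half_line a u" unfolding half_line_def by auto
qed

lemma half_line_graph_pos:
  assumes "u$1 > 0"
  shows "half_line a u = {p. a$1 \<le> p$1 \<and> p$2 = line_at a u (p$1)}"
proof (intro set_eqI iffI)
  fix p assume "p \<in> half_line a u"
  then obtain t where t: "t \<ge> 0" "p = a + t *\<^sub>R u" unfolding half_line_def by auto
  have "t * u$1 \<ge> 0" using t(1) assms by simp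
  moreover have "a$2 + t * u$2 = a$2 + (t * u$1) * (u$2 / u$1)" using assms by simp
  ultimately show "p \<in> {p. a$1 \<le> p$1 \<and> p$2 = line_at a u (p$1)}"
    using t unfolding line_at_def by simp
next
  fix p :: "real^2" assume p: "p \<in> {p. a$1 \<le> p$1 \<and> p$2 = line_at a u (p$1)}"
  define t where "t = (p$1 - a$1) / u$1"
  have "t \<ge> 0" unfolding t_def using p assms by simp
  moreover have "p = a + t *\<^sub>R u"
    unfolding vec2_eq_iff t_def using p assms by (simp add: line_at_def field_simps)
  ultimately show "p \<in> half_line a u" unfolding half_line_def by auto
qed

lemma segment_graph:
  assumes "a$1 < b$1"
  shows "closed_segment a b = {p. a$1 \<le> p$1 \<and> p$1 \<le> b$1 \<and> p$2 = line_at a (b - a) (p$1)}"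
proof (intro set_eqI iffI)
  fix p assume "p \<in> closed_segment a b"
  then obtain t where t: "0 \<le> t" "t \<le> 1" "p = (1 - t) *\<^sub>R a + t *\<^sub>R b"
    unfolding closed_segment_def by auto
  have "p$1 = (1-t)*a$1 + t*b$1" "p$2 = (1-t)*a$2 + t*b$2" using t(3) by simp_all
  then have e1: "p$1 = a$1 + t * (b$1 - a$1)" and e2: "p$2 = a$2 + t * (b$2 - a$2)"
    by (simp_all add: algebra_simps)
  have "t * (b$1 - a$1) \<ge> 0" "t * (b$1 - a$1) \<le> b$1 - a$1" using t assms
    by (simp_all add: mult_left_le)
  moreover have "a$2 + t * (b$2 - a$2) = a$2 + (t * (b$1 - a$1)) * ((b$2 - a$2) / (b$1 - a$1))"
    using assms by simp
  ultimately show "p \<in> {p. a$1 \<le> p$1 \<and> p$1 \<le> b$1 \<and> p$2 = line_at a (b - a) (p$1)}"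
    using e1 e2 unfolding line_at_def by simp
next
  fix p :: "real^2" assume p: "p \<in> {p. a$1 \<le> p$1 \<and> p$1 \<le> b$1 \<and> p$2 = line_at a (b - a) (p$1)}"
  define t where "t = (p$1 - a$1) / (b$1 - a$1)"
  have "t \<ge> 0" "t \<le> 1" unfolding t_def using p assms by simp_all
  moreover have "t * (b$1 - a$1) = p$1 - a$1" unfolding t_def using assms by simp
  moreover have "t * (b$2 - a$2) = (p$1 - a$1) * ((b$2 - a$2) / (b$1 - a$1))"
    unfolding t_def by simp
  moreover have "(1-t)*a$1 + t*b$1 = a$1 + t*(b$1-a$1)" "(1-t)*a$2 + t*b$2 = a$2 + t*(b$2-a$2)"
    by (simp_all add: algebra_simps)
  ultimately have "p = (1 - t) *\<^sub>R a + t *\<^sub>R b"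
    unfolding vec2_eq_iff using p by (simp add: line_at_def)
  with \<open>t \<ge> 0\<close> \<open>t \<le> 1\<close> show "p \<in> closed_segment a b" unfolding closed_segment_def by auto
qed

lemma segment_graph':
  assumes "b$1 < a$1"
  shows "closed_segment a b = {p. b$1 \<le> p$1 \<and> p$1 \<le> a$1 \<and> p$2 = line_at a (a - b) (p$1)}"
  using segment_graph[OF assms] line_at_same_line[of a b] assms
  by (simp add: closed_segment_commute)

text \<open>When both half-lines of a chain point to the left, the chain is a lens with apex at the
  right end b: one branch is the second half-line, the other is the first half-line continued
  by the segment (a broken line, written with min and max around the abscissa of a).\<close>
definition left_lens :: "real^2 \<Rightarrow> real^2 \<Rightarrow> real^2 \<Rightarrow> real^2 \<Rightarrow> lens" where
  "left_lens a b u v = \<lparr>opens_left = True, apex = b$1, branch1 = line_at b v,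
     branch2 = (\<lambda>x. a$2 + (min x (a$1) - a$1) * (u$2/u$1) +
       (max x (a$1) - a$1) * ((b-a)$2/(b-a)$1))\<rparr>"

definition right_lens :: "real^2 \<Rightarrow> real^2 \<Rightarrow> real^2 \<Rightarrow> real^2 \<Rightarrow> lens" where
  "right_lens a b u v = \<lparr>opens_left = False, apex = b$1, branch1 = line_at b v,
     branch2 = (\<lambda>x. a$2 + (max x (a$1) - a$1) * (u$2/u$1) +
       (min x (a$1) - a$1) * ((a-b)$2/(a-b)$1))\<rparr>"

lemma left_lens:
  assumes "u$1 < 0" "v$1 < 0" "a$1 < b$1"
  shows "wf_lens (left_lens a b u v) \<and> lens_set (left_lens a b u v) = chain a b u v"
proof
  let ?L = "left_lens a b u v"
  let ?g = "branch2 ?L"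
  have g_left: "x \<le> a$1 \<Longrightarrow> ?g x = line_at a u x" for x
    unfolding left_lens_def line_at_def by simp
  have g_right: "a$1 \<le> x \<Longrightarrow> ?g x = line_at a (b - a) x" for x
    unfolding left_lens_def line_at_def by simp
  show "wf_lens ?L"
    unfolding wf_lens_def using g_right[of "b$1"] assms
    by (auto simp: left_lens_def line_at_def intro!: continuous_intros)
  show "lens_set ?L = chain a b u v"
  proof (intro set_eqI)
    fix p :: "real^2"
    have "p \<in> lens_set ?L \<longleftrightarrow> p$1 \<le> b$1 \<and> (p$2 = line_at b v (p$1) \<or> p$2 = ?g (p$1))"
      unfolding lens_set_def lens_dom_def by (simp add: left_lens_def)
    moreover have "p \<in> chain a b u v \<longleftrightarrow> (p$1 \<le> a$1 \<and> p$2 = line_at a u (p$1)) \<or>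
       (a$1 \<le> p$1 \<and> p$1 \<le> b$1 \<and> p$2 = line_at a (b - a) (p$1)) \<or>
       (p$1 \<le> b$1 \<and> p$2 = line_at b v (p$1))"
      unfolding chain_def half_line_graph_neg[OF assms(1)] half_line_graph_neg[OF assms(2)]
        segment_graph[OF assms(3)] by blast
    moreover have "?g (a$1) = a$2" using g_left by simp
    ultimately show "p \<in> lens_set ?L \<longleftrightarrow> p \<in> chain a b u v"
      using g_left g_right assms
      by (cases "p$1 = a$1"; cases "p$1 \<le> a$1") (auto simp: linorder_not_le)
  qed
qed

lemma right_lens:
  assumes "u$1 > 0" "v$1 > 0" "b$1 < a$1"
  shows "wf_lens (right_lens a b u v) \<and> lens_set (right_lens a b u v) = chain a b u v"
proof
  let ?L = "right_lens a b u v"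
  let ?g = "branch2 ?L"
  have g_right: "a$1 \<le> x \<Longrightarrow> ?g x = line_at a u x" for x
    unfolding right_lens_def line_at_def by simp
  have g_left: "x \<le> a$1 \<Longrightarrow> ?g x = line_at a (a - b) x" for x
    unfolding right_lens_def line_at_def by simp
  have "line_at a (a - b) (b$1) = b$2"
    using line_at_same_line[of a b "b$1"] assms by simp
  then show "wf_lens ?L"
    unfolding wf_lens_def using g_left[of "b$1"] assms
    by (auto simp: right_lens_def line_at_def intro!: continuous_intros)
  show "lens_set ?L = chain a b u v"
  proof (intro set_eqI)
    fix p :: "real^2"
    have "p \<in> lens_set ?L \<longleftrightarrow> b$1 \<le> p$1 \<and> (p$2 = line_at b v (p$1) \<or> p$2 = ?g (p$1))"
      unfolding lens_set_def lens_dom_def by (simp add: right_lens_def)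
    moreover have "p \<in> chain a b u v \<longleftrightarrow> (a$1 \<le> p$1 \<and> p$2 = line_at a u (p$1)) \<or>
       (b$1 \<le> p$1 \<and> p$1 \<le> a$1 \<and> p$2 = line_at a (a - b) (p$1)) \<or>
       (b$1 \<le> p$1 \<and> p$2 = line_at b v (p$1))"
      unfolding chain_def half_line_graph_pos[OF assms(1)] half_line_graph_pos[OF assms(2)]
        segment_graph'[OF assms(3)] by blast
    moreover have "?g (a$1) = a$2" using g_right by simp
    ultimately show "p \<in> lens_set ?L \<longleftrightarrow> p \<in> chain a b u v"
      using g_left g_right assms
      by (cases "p$1 = a$1"; cases "a$1 \<le> p$1") (auto simp: linorder_not_le)
  qed
qed

section \<open>Paths crossing a box\<close>

lemma mem_cbox_pt: "z \<in> cbox (pt a1 a2) (pt b1 b2) \<longleftrightarrow> a1 \<le> z$1 \<and> z$1 \<le> b1 \<and> a2 \<le> z$2 \<and> z$2 \<le> b2"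
  by (simp add: mem_box_cart forall_2)

lemma closed_segment_coord_bounds:
  assumes "(z::real^2) \<in> closed_segment p q"
  shows "min (p$i) (q$i) \<le> z$i \<and> z$i \<le> max (p$i) (q$i)"
proof -
  obtain t where t: "0 \<le> t" "t \<le> 1" "z = (1 - t) *\<^sub>R p + t *\<^sub>R q"
    using assms unfolding closed_segment_def by auto
  have e: "z$i = (1 - t) * p$i + t * q$i" using t(3) by simp
  have "(1 - t) * min (p$i) (q$i) \<le> (1 - t) * p$i" "t * min (p$i) (q$i) \<le> t * q$i"
    "(1 - t) * p$i \<le> (1 - t) * max (p$i) (q$i)" "t * q$i \<le> t * max (p$i) (q$i)"
    using t by (auto intro!: mult_left_mono)
  moreover have "(1 - t) * m + t * m = m" for m :: real by (simp add: algebra_simps)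
  ultimately show ?thesis unfolding e by (metis add_mono)
qed

lemma closed_segment_horizontal:
  "z \<in> closed_segment (pt x1 y) (pt x2 y) \<Longrightarrow> x1 \<le> x2 \<Longrightarrow> z$2 = y \<and> x1 \<le> z$1 \<and> z$1 \<le> x2"
  using closed_segment_coord_bounds[of z "pt x1 y" "pt x2 y" 1]
    closed_segment_coord_bounds[of z "pt x1 y" "pt x2 y" 2] by simp

lemma closed_segment_horizontal':
  "z \<in> closed_segment (pt x2 y) (pt x1 y) \<Longrightarrow> x1 \<le> x2 \<Longrightarrow> z$2 = y \<and> x1 \<le> z$1 \<and> z$1 \<le> x2"
  using closed_segment_horizontal[of z x1 y x2] by (simp add: closed_segment_commute)

lemma closed_segment_vertical:
  "z \<in> closed_segment (pt x y1) (pt x y2) \<Longrightarrow> y1 \<le> y2 \<Longrightarrow> z$1 = x \<and> y1 \<le> z$2 \<and> z$2 \<le> y2"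
  using closed_segment_coord_bounds[of z "pt x y1" "pt x y2" 1]
    closed_segment_coord_bounds[of z "pt x y1" "pt x y2" 2] by simp

lemma closed_segment_subset_cbox:
  assumes "p \<in> cbox a b" "q \<in> cbox a b"
  shows "closed_segment p q \<subseteq> cbox a b"
  using closed_segment_subset[OF assms convex_box(1)] .

text \<open>Extending f by horizontal stubs and g by vertical rays to the bottom and top of a larger
  box puts us in the situation of Fashoda's theorem.\<close>
lemma fashoda_extended_paths_meet:
  fixes f g :: "real \<Rightarrow> real^2"
  assumes M: "0 < M" and pf: "path f" and pg: "path g"
    and bf: "path_image f \<subseteq> cbox (pt (-M) (-H)) (pt M H)"
    and bg: "path_image g \<subseteq> cbox (pt (-M) (-H)) (pt M H)"
    and sf: "pathstart f = pt (-M) l" and ff: "pathfinish f = pt M r"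
    and sg: "pathstart g = pt (-M) q1" and fg: "pathfinish g = pt (-M) q2"
    and q: "q1 < l" "l < q2"
  shows "\<exists>z. ((z$2 = l \<and> -M-1 \<le> z$1 \<and> z$1 \<le> -M) \<or> z \<in> path_image f \<or>
      (z$2 = r \<and> M \<le> z$1 \<and> z$1 \<le> M+1)) \<and>
    ((z$1 = -M-1/2 \<and> z$2 \<le> q1) \<or> (z$2 = q1 \<and> -M-1/2 \<le> z$1 \<and> z$1 \<le> -M) \<or>
      z \<in> path_image g \<or> (z$2 = q2 \<and> -M-1/2 \<le> z$1 \<and> z$1 \<le> -M) \<or>
      (z$1 = -M-1/2 \<and> q2 \<le> z$2))"
proof -
  have fbox: "z \<in> path_image f \<Longrightarrow> -M \<le> z$1 \<and> z$1 \<le> M \<and> -H \<le> z$2 \<and> z$2 \<le> H" for z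
    using bf mem_cbox_pt by blast
  have gbox: "z \<in> path_image g \<Longrightarrow> -M \<le> z$1 \<and> z$1 \<le> M \<and> -H \<le> z$2 \<and> z$2 \<le> H" for z
    using bg mem_cbox_pt by blast
  have ls: "pt (-M) l \<in> path_image f" using sf pathstart_in_path_image by metis
  have rs: "pt M r \<in> path_image f" using ff pathfinish_in_path_image by metis
  have q1s: "pt (-M) q1 \<in> path_image g" using sg pathstart_in_path_image by metis
  have q2s: "pt (-M) q2 \<in> path_image g" using fg pathfinish_in_path_image by metis
  have bl: "-H \<le> l \<and> l \<le> H" "-H \<le> r \<and> r \<le> H" "-H \<le> q1 \<and> q1 \<le> H" "-H \<le> q2 \<and> q2 \<le> H"
    using fbox[OF ls] fbox[OF rs] gbox[OF q1s] gbox[OF q2s] by auto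
  define A where "A = pt (-M-1) (-H-1)"
  define B where "B = pt (M+1) (H+1)"
  define f' where
    "f' = linepath (pt (-M-1) l) (pt (-M) l) +++ (f +++ linepath (pt M r) (pt (M+1) r))"
  define g' where "g' = linepath (pt (-M-1/2) (-H-1)) (pt (-M-1/2) q1) +++
     (linepath (pt (-M-1/2) q1) (pt (-M) q1) +++ (g +++ (linepath (pt (-M) q2) (pt (-M-1/2) q2) +++
      linepath (pt (-M-1/2) q2) (pt (-M-1/2) (H+1)))))"
  have pf': "path f'" unfolding f'_def using pf sf ff by (auto intro!: path_join_imp)
  have pg': "path g'" unfolding g'_def using pg sg fg by (auto intro!: path_join_imp)
  have imf': "path_image f' = closed_segment (pt (-M-1) l) (pt (-M) l) \<union>
       (path_image f \<union> closed_segment (pt M r) (pt (M+1) r))"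
    unfolding f'_def using sf ff by (simp add: path_image_join)
  have img': "path_image g' = closed_segment (pt (-M-1/2) (-H-1)) (pt (-M-1/2) q1) \<union>
     (closed_segment (pt (-M-1/2) q1) (pt (-M) q1) \<union> (path_image g \<union>
      (closed_segment (pt (-M) q2) (pt (-M-1/2) q2) \<union>
        closed_segment (pt (-M-1/2) q2) (pt (-M-1/2) (H+1)))))"
    unfolding g'_def using sg fg by (simp add: path_image_join)
  have sub: "cbox (pt (-M) (-H)) (pt M H) \<subseteq> cbox A B" unfolding A_def B_def
    using mem_cbox_pt by (auto simp: subset_iff mem_cbox_pt)
  have inAB: "pt x y \<in> cbox A B" if "-M-1 \<le> x" "x \<le> M+1" "-H-1 \<le> y" "y \<le> H+1" for x y
    unfolding A_def B_def mem_cbox_pt using that by simp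
  have bf': "path_image f' \<subseteq> cbox A B"
    unfolding imf' using bf sub bl M
    by (intro Un_least closed_segment_subset_cbox inAB order_trans[OF bf sub]) auto
  have bg': "path_image g' \<subseteq> cbox A B"
    unfolding img' using bg sub bl M
    by (intro Un_least closed_segment_subset_cbox inAB order_trans[OF bg sub]) auto
  obtain z where zf': "z \<in> path_image f'" and zg': "z \<in> path_image g'"
    apply (rule fashoda[OF pf' pg' bf' bg'])
    unfolding f'_def g'_def A_def B_def using sf ff sg fg by auto
  have h1: "z \<in> closed_segment (pt (-M-1) l) (pt (-M) l) \<Longrightarrow> z$2 = l \<and> -M-1 \<le> z$1 \<and> z$1 \<le> -M"
    by (rule closed_segment_horizontal) simp_all
  have h2: "z \<in> closed_segment (pt M r) (pt (M+1) r) \<Longrightarrow> z$2 = r \<and> M \<le> z$1 \<and> z$1 \<le> M+1"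
    by (rule closed_segment_horizontal) simp_all
  have zf: "(z$2 = l \<and> -M-1 \<le> z$1 \<and> z$1 \<le> -M) \<or> z \<in> path_image f \<or> (z$2 = r \<and> M \<le> z$1 \<and> z$1 \<le> M+1)"
    using zf' h1 h2 unfolding imf' by blast
  have k1: "z \<in> closed_segment (pt (-M-1/2) (-H-1)) (pt (-M-1/2) q1) \<Longrightarrow>
      z$1 = -M-1/2 \<and> -H-1 \<le> z$2 \<and> z$2 \<le> q1"
    by (rule closed_segment_vertical) (use bl in simp_all)
  have k2: "z \<in> closed_segment (pt (-M-1/2) q1) (pt (-M) q1) \<Longrightarrow> z$2 = q1 \<and> -M-1/2 \<le> z$1 \<and> z$1 \<le> -M"
    by (rule closed_segment_horizontal) simp_all
  have k3: "z \<in> closed_segment (pt (-M) q2) (pt (-M-1/2) q2) \<Longrightarrow> z$2 = q2 \<and> -M-1/2 \<le> z$1 \<and> z$1 \<le> -M"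
    by (rule closed_segment_horizontal') simp_all
  have k4: "z \<in> closed_segment (pt (-M-1/2) q2) (pt (-M-1/2) (H+1)) \<Longrightarrow>
      z$1 = -M-1/2 \<and> q2 \<le> z$2 \<and> z$2 \<le> H+1"
    by (rule closed_segment_vertical) (use bl in simp_all)
  have zg: "(z$1 = -M-1/2 \<and> -H-1 \<le> z$2 \<and> z$2 \<le> q1) \<or> (z$2 = q1 \<and> -M-1/2 \<le> z$1 \<and> z$1 \<le> -M) \<or>
     z \<in> path_image g \<or> (z$2 = q2 \<and> -M-1/2 \<le> z$1 \<and> z$1 \<le> -M) \<or>
     (z$1 = -M-1/2 \<and> q2 \<le> z$2 \<and> z$2 \<le> H+1)"
    using zg' k1 k2 k3 k4 unfolding img' by blast
  show ?thesis using zf zg by (intro exI[of _ z]) blast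
qed

text \<open>A common point of the extended paths lying on one of the added pieces can only be an
  endpoint of f or g, which lies on both paths anyway.\<close>
lemma path_crossing_box_meets_loop:
  fixes f g :: "real \<Rightarrow> real^2"
  assumes M: "0 < M" and pf: "path f" and pg: "path g"
    and bf: "path_image f \<subseteq> cbox (pt (-M) (-H)) (pt M H)"
    and bg: "path_image g \<subseteq> cbox (pt (-M) (-H)) (pt M H)"
    and sf: "pathstart f = pt (-M) l" and ff: "pathfinish f = pt M r"
    and sg: "pathstart g = pt (-M) q1" and fg: "pathfinish g = pt (-M) q2"
    and q: "q1 < l" "l < q2"
  shows "\<exists>z. z \<in> path_image f \<and> z \<in> path_image g"
proof -
  have fbox: "z \<in> path_image f \<Longrightarrow> -M \<le> z$1 \<and> z$1 \<le> M" for z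
    using bf mem_cbox_pt by blast
  have gbox: "z \<in> path_image g \<Longrightarrow> -M \<le> z$1 \<and> z$1 \<le> M" for z
    using bg mem_cbox_pt by blast
  have ls: "pt (-M) l \<in> path_image f" using sf pathstart_in_path_image by metis
  have rs: "pt M r \<in> path_image f" using ff pathfinish_in_path_image by metis
  have q1s: "pt (-M) q1 \<in> path_image g" using sg pathstart_in_path_image by metis
  have q2s: "pt (-M) q2 \<in> path_image g" using fg pathfinish_in_path_image by metis
  obtain z where zf: "(z$2 = l \<and> -M-1 \<le> z$1 \<and> z$1 \<le> -M) \<or> z \<in> path_image f \<or>
      (z$2 = r \<and> M \<le> z$1 \<and> z$1 \<le> M+1)"
    and zg: "(z$1 = -M-1/2 \<and> z$2 \<le> q1) \<or> (z$2 = q1 \<and> -M-1/2 \<le> z$1 \<and> z$1 \<le> -M) \<or>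
      z \<in> path_image g \<or> (z$2 = q2 \<and> -M-1/2 \<le> z$1 \<and> z$1 \<le> -M) \<or>
      (z$1 = -M-1/2 \<and> q2 \<le> z$2)"
    using fashoda_extended_paths_meet[OF assms] by blast
  show ?thesis
  proof (cases "z \<in> path_image f")
    case zf1: True
    show ?thesis
    proof (cases "z \<in> path_image g")
      case True then show ?thesis using zf1 by blast
    next
      case False
      then have "(z$2 = q1 \<and> z$1 = -M) \<or> (z$2 = q2 \<and> z$1 = -M)"
        using zg fbox[OF zf1] by auto
      then have "z = pt (-M) q1 \<or> z = pt (-M) q2" unfolding vec2_eq_iff by auto
      then show ?thesis using zf1 q1s q2s by blast
    qed
  next
    case zf0: False
    then have zg1: "z \<in> path_image g" using zf zg q M by auto
    then have "(z$2 = l \<and> z$1 = -M) \<or> (z$2 = r \<and> z$1 = M)"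
      using zf zf0 gbox[OF zg1] by auto
    then have "z = pt (-M) l \<or> z = pt M r" unfolding vec2_eq_iff by auto
    then show ?thesis using zg1 ls rs by blast
  qed
qed

section \<open>Chains whose half-lines point away from each other\<close>

lemma graph_point_in_half_line_neg: "u$1 < 0 \<Longrightarrow> x \<le> a$1 \<Longrightarrow> pt x (line_at a u x) \<in> half_line a u"
  unfolding half_line_graph_neg by simp

lemma graph_point_in_half_line_pos: "v$1 > 0 \<Longrightarrow> b$1 \<le> x \<Longrightarrow> pt x (line_at b v x) \<in> half_line b v"
  unfolding half_line_graph_pos by simp

lemma left_rays_ordered:
  assumes u: "u$1 < 0" "u'$1 < 0" and dj: "chain a b u v \<inter> chain a' b' u' v' = {}"
  shows "(\<forall>x \<le> min (a$1) (a'$1). line_at a u x < line_at a' u' x) \<or>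
    (\<forall>x \<le> min (a$1) (a'$1). line_at a' u' x < line_at a u x)"
proof -
  let ?z = "min (a$1) (a'$1)"
  have ne: "line_at a u x \<noteq> line_at a' u' x" if "x \<le> ?z" for x
  proof
    assume eq: "line_at a u x = line_at a' u' x"
    have "pt x (line_at a u x) \<in> half_line a u"
      using graph_point_in_half_line_neg[OF u(1), of x a] that by simp
    moreover have "pt x (line_at a u x) \<in> half_line a' u'"
      using graph_point_in_half_line_neg[OF u(2), of x a'] that unfolding eq by simp
    ultimately show False using dj chain_subsets(1) by blast
  qed
  have neg: "line_at c w x - line_at c' w' x < 0"
    if "line_at c w ?z < line_at c' w' ?z" "\<And>x. x \<le> ?z \<Longrightarrow> line_at c w x \<noteq> line_at c' w' x"
      "x \<le> ?z" for c w c' w' x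
    by (rule continuous_nonvanishing_neg_on_interval[of "{..?z}" _ ?z])
      (use that in \<open>auto intro!: continuous_intros line_at_continuous\<close>)
  show ?thesis
  proof (cases "line_at a u ?z < line_at a' u' ?z")
    case True
    then show ?thesis using neg[of a u a' u'] ne by auto
  next
    case False
    then have "line_at a' u' ?z < line_at a u ?z" using ne[of ?z] by linarith
    then show ?thesis using neg[of a' u' a u] ne by (metis diff_less_0_iff_less)
  qed
qed

lemma chain_path_in_convex:
  assumes B: "convex B" "e \<in> B" "a \<in> B" "b \<in> B" "p \<in> B"
    and e: "e \<in> half_line a u" and p: "p \<in> chain a b u v"
  shows "\<exists>g. path g \<and> path_image g \<subseteq> chain a b u v \<inter> B \<and> pathstart g = e \<and> pathfinish g = p"
proof -
  have sub: "closed_segment x y \<subseteq> chain a b u v \<inter> B"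
    if "x \<in> S" "y \<in> S" "convex S" "S \<subseteq> chain a b u v" "x \<in> B" "y \<in> B" for x y S
    using closed_segment_subset[OF that(1-3)] closed_segment_subset[OF that(5,6) B(1)] that(4)
    by blast
  have ea: "closed_segment e a \<subseteq> chain a b u v \<inter> B"
    using sub[OF e base_in_half_line convex_half_line chain_subsets(1) B(2,3)] .
  consider "p \<in> half_line a u" | "p \<in> closed_segment a b" | "p \<in> half_line b v"
    using p unfolding chain_def by blast
  then show ?thesis
  proof cases
    case 1
    then have "closed_segment e p \<subseteq> chain a b u v \<inter> B"
      using sub[OF e _ convex_half_line chain_subsets(1) B(2,5)] by blast
    then show ?thesis by (intro exI[of _ "linepath e p"]) auto
  next
    case 2
    then have "closed_segment a p \<subseteq> chain a b u v \<inter> B"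
      using sub[OF ends_in_segment(1) _ convex_closed_segment chain_subsets(2) B(3,5)] by blast
    then show ?thesis using ea
      by (intro exI[of _ "linepath e a +++ linepath a p"]) (auto simp: path_image_join)
  next
    case 3
    then have "closed_segment b p \<subseteq> chain a b u v \<inter> B"
      using sub[OF base_in_half_line _ convex_half_line chain_subsets(3) B(4,5)] by blast
    moreover have "closed_segment a b \<subseteq> chain a b u v \<inter> B"
      using sub[OF ends_in_segment convex_closed_segment chain_subsets(2) B(3,4)] .
    ultimately show ?thesis using ea
      by (intro exI[of _ "linepath e a +++ (linepath a b +++ linepath b p)"])
        (auto simp: path_image_join path_join_imp)
  qed
qed

lemma finite_bounded_abscissae:
  fixes S :: "(real^2) set"
  assumes "finite S"
  obtains M where "0 < M" "\<And>z. z \<in> S \<Longrightarrow> \<bar>z$1\<bar> < M"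
proof -
  obtain K where K: "\<forall>z\<in>S. norm z \<le> K"
    using finite_imp_bounded[OF assms] unfolding bounded_iff by blast
  show ?thesis
  proof (rule that[of "\<bar>K\<bar> + 1"])
    fix z assume "z \<in> S"
    then show "\<bar>z$1\<bar> < \<bar>K\<bar> + 1"
      using K component_le_norm_cart[of z 1] by fastforce
  qed simp
qed

lemma finite_subset_cbox:
  fixes S :: "(real^2) set"
  assumes "finite S" and "\<And>z. z \<in> S \<Longrightarrow> \<bar>z$1\<bar> \<le> M"
  obtains H where "S \<subseteq> cbox (pt (-M) (-H)) (pt M H)"
proof -
  obtain H where H: "\<forall>z\<in>S. norm z \<le> H"
    using finite_imp_bounded[OF assms(1)] unfolding bounded_iff by blast
  have "z \<in> cbox (pt (-M) (-H)) (pt M H)" if "z \<in> S" for z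
  proof -
    have "\<bar>z$2\<bar> \<le> H" using H that component_le_norm_cart[of z 2] by fastforce
    then show ?thesis using assms(2)[OF that] unfolding mem_cbox_pt by (auto simp: abs_le_iff)
  qed
  then show ?thesis using that by blast
qed

text \<open>If C met E at p, the loop running from the far left along C to p and back along E would
  enclose the left end of D in a large box, while D leaves the box on the right; by the crossing
  lemma D would meet C or E.\<close>
lemma lr_chains_disjoint_trans:
  assumes uC: "uC$1 < 0" "0 < vC$1" and uD: "uD$1 < 0" "0 < vD$1" and uE: "uE$1 < 0" "0 < vE$1"
    and dCD: "chain aC bC uC vC \<inter> chain aD bD uD vD = {}"
    and dDE: "chain aD bD uD vD \<inter> chain aE bE uE vE = {}"
    and oCD: "\<forall>x \<le> min (aC$1) (aD$1). line_at aC uC x < line_at aD uD x"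
    and oDE: "\<forall>x \<le> min (aD$1) (aE$1). line_at aD uD x < line_at aE uE x"
  shows "chain aC bC uC vC \<inter> chain aE bE uE vE = {}"
proof (rule ccontr)
  assume "chain aC bC uC vC \<inter> chain aE bE uE vE \<noteq> {}"
  then obtain p where pC: "p \<in> chain aC bC uC vC" and pE: "p \<in> chain aE bE uE vE" by blast
  let ?V = "{aC, bC, aD, bD, aE, bE, p}"
  have "finite ?V" by simp
  then obtain M where M: "0 < M" "\<And>z. z \<in> ?V \<Longrightarrow> \<bar>z$1\<bar> < M"
    using finite_bounded_abscissae by blast
  let ?eC = "pt (-M) (line_at aC uC (-M))" and ?eD = "pt (-M) (line_at aD uD (-M))"
    and ?eE = "pt (-M) (line_at aE uE (-M))" and ?fD = "pt M (line_at bD vD M)"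
  let ?W = "{?eC, ?eD, ?eE, ?fD} \<union> ?V"
  have absc: "\<bar>z$1\<bar> \<le> M" if "z \<in> ?W" for z
  proof (cases "z \<in> ?V")
    case True
    then show ?thesis using M(2)[OF True] by linarith
  next
    case False
    then have "z$1 = -M \<or> z$1 = M" using that by auto
    then show ?thesis using M(1) by auto
  qed
  have "finite ?W" by simp
  then obtain H where B: "?W \<subseteq> cbox (pt (-M) (-H)) (pt M H)"
    by (metis finite_subset_cbox[OF _ absc])
  let ?B = "cbox (pt (-M) (-H)) (pt M H)"
  have "-M \<le> aC$1" "-M \<le> aD$1" "-M \<le> aE$1" "bD$1 \<le> M"
    using M(2)[of aC] M(2)[of aD] M(2)[of aE] M(2)[of bD] by (simp_all add: abs_less_iff)
  then have left_ends: "?eC \<in> half_line aC uC" "?eD \<in> half_line aD uD" "?eE \<in> half_line aE uE"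
    and "?fD \<in> half_line bD vD"
    using graph_point_in_half_line_neg[OF uC(1)] graph_point_in_half_line_neg[OF uD(1)]
      graph_point_in_half_line_neg[OF uE(1)] graph_point_in_half_line_pos[OF uD(2)] by blast+
  then have "?fD \<in> chain aD bD uD vD" using chain_subsets(3) by blast
  have boxed: "?eC \<in> ?B" "?eD \<in> ?B" "?eE \<in> ?B" "?fD \<in> ?B" "aC \<in> ?B" "bC \<in> ?B"
    "aD \<in> ?B" "bD \<in> ?B" "aE \<in> ?B" "bE \<in> ?B" "p \<in> ?B"
    using B by simp_all
  obtain gD where gD: "path gD" "path_image gD \<subseteq> chain aD bD uD vD \<inter> ?B"
      "pathstart gD = ?eD" "pathfinish gD = ?fD"
    using chain_path_in_convex[OF convex_box(1) boxed(2,7,8,4) left_ends(2)]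
      \<open>?fD \<in> chain aD bD uD vD\<close> by blast
  obtain gC where gC: "path gC" "path_image gC \<subseteq> chain aC bC uC vC \<inter> ?B"
      "pathstart gC = ?eC" "pathfinish gC = p"
    using chain_path_in_convex[OF convex_box(1) boxed(1,5,6,11) left_ends(1) pC] by blast
  obtain gE where gE: "path gE" "path_image gE \<subseteq> chain aE bE uE vE \<inter> ?B"
      "pathstart gE = ?eE" "pathfinish gE = p"
    using chain_path_in_convex[OF convex_box(1) boxed(3,9,10,11) left_ends(3) pE] by blast
  let ?G = "gC +++ reversepath gE"
  have G: "path ?G" "path_image ?G = path_image gC \<union> path_image gE"
    using gC gE by (auto intro: path_join_imp simp: path_image_join)
  have order: "line_at aC uC (-M) < line_at aD uD (-M)" "line_at aD uD (-M) < line_at aE uE (-M)"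
    using oCD oDE \<open>-M \<le> aC$1\<close> \<open>-M \<le> aD$1\<close> \<open>-M \<le> aE$1\<close> by simp_all
  have "path_image gD \<subseteq> ?B" "path_image ?G \<subseteq> ?B" using gD(2) gC(2) gE(2) G(2) by auto
  moreover have "pathstart ?G = ?eC" "pathfinish ?G = ?eE" using gC(3) gE(3) by simp_all
  ultimately obtain z where "z \<in> path_image gD" "z \<in> path_image ?G"
    using path_crossing_box_meets_loop[OF M(1) gD(1) G(1) _ _ gD(3,4) _ _ order] by blast
  then show False using gD(2) gC(2) gE(2) G(2) dCD dDE by blast
qed

lemma lr_chains_order_trans:
  assumes uC: "uC$1 < 0" "0 < vC$1" and uD: "uD$1 < 0" "0 < vD$1" and uE: "uE$1 < 0" "0 < vE$1"
    and dCD: "chain aC bC uC vC \<inter> chain aD bD uD vD = {}"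
    and dDE: "chain aD bD uD vD \<inter> chain aE bE uE vE = {}"
    and oCD: "\<forall>x \<le> min (aC$1) (aD$1). line_at aC uC x < line_at aD uD x"
    and oDE: "\<forall>x \<le> min (aD$1) (aE$1). line_at aD uD x < line_at aE uE x"
  shows "chain aC bC uC vC \<inter> chain aE bE uE vE = {} \<and>
    (\<forall>x \<le> min (aC$1) (aE$1). line_at aC uC x < line_at aE uE x)"
proof -
  have dCE: "chain aC bC uC vC \<inter> chain aE bE uE vE = {}"
    using lr_chains_disjoint_trans[OF uC uD uE dCD dDE oCD oDE] .
  let ?m = "min (aC$1) (min (aD$1) (aE$1))"
  have "line_at aC uC ?m < line_at aD uD ?m" by (rule oCD[rule_format]) (simp add: min_le_iff_disj)
  moreover have "line_at aD uD ?m < line_at aE uE ?m"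
    by (rule oDE[rule_format]) (simp add: min_le_iff_disj)
  ultimately have lt: "line_at aC uC ?m < line_at aE uE ?m" by linarith
  have mm: "?m \<le> min (aC$1) (aE$1)" by simp
  from left_rays_ordered[OF uC(1) uE(1) dCE]
  have "\<forall>x \<le> min (aC$1) (aE$1). line_at aC uC x < line_at aE uE x"
  proof
    assume "\<forall>x \<le> min (aC$1) (aE$1). line_at aE uE x < line_at aC uC x"
    then have "line_at aE uE ?m < line_at aC uC ?m" using mm by blast
    then show ?thesis using lt by linarith
  qed
  then show ?thesis using dCE by blast
qed

section \<open>The non-vertical case\<close>

definition lr_chain :: "(real^2) set \<Rightarrow> bool" where
  "lr_chain C \<longleftrightarrow> (\<exists>a b u v. u$1 < 0 \<and> 0 < v$1 \<and> C = chain a b u v)"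

definition nonvertical_chain :: "(real^2) set \<Rightarrow> bool" where
  "nonvertical_chain C \<longleftrightarrow> (\<exists>a b u v. a$1 \<noteq> b$1 \<and> u$1 \<noteq> 0 \<and> v$1 \<noteq> 0 \<and> C = chain a b u v)"

lemma nonvertical_chain_is_lens:
  assumes "nonvertical_chain C" and "\<not> lr_chain C"
  shows "\<exists>l. wf_lens l \<and> lens_set l = C"
proof -
  obtain a b u v where r: "a$1 \<noteq> b$1" "u$1 \<noteq> 0" "v$1 \<noteq> 0" "C = chain a b u v"
    using assms(1) unfolding nonvertical_chain_def by blast
  have "\<not> (u$1 < 0 \<and> 0 < v$1)" "\<not> (v$1 < 0 \<and> 0 < u$1)"
    using assms(2) r(4) chain_swap[of a b u v] unfolding lr_chain_def by metis+
  then consider "u$1 < 0" "v$1 < 0" | "0 < u$1" "0 < v$1" using r(2,3) by linarith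
  then show ?thesis
  proof cases
    case 1
    consider "a$1 < b$1" | "b$1 < a$1" using r(1) by linarith
    then show ?thesis
      using left_lens[OF 1] left_lens[OF 1(2,1)] chain_swap[of a b u v] r(4) by cases metis+
  next
    case 2
    consider "b$1 < a$1" | "a$1 < b$1" using r(1) by linarith
    then show ?thesis
      using right_lens[OF 2] right_lens[OF 2(2,1)] chain_swap[of a b u v] r(4) by cases metis+
  qed
qed

lemma proper_coloring_lr_chains:
  assumes "finite F" and "W \<subseteq> F" and "\<forall>C\<in>W. lr_chain C"
  shows "\<exists>c. proper_coloring W disjointness_adj (clique_number F disjointness_adj) c"
proof -
  obtain A B U V where R: "\<And>C. C \<in> W \<Longrightarrow> U C $1 < 0 \<and> 0 < V C $1 \<and> C = chain (A C) (B C) (U C) (V C)"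
    using assms(3) unfolding lr_chain_def by metis
  define ch where "ch C = chain (A C) (B C) (U C) (V C)" for C
  have ch: "ch C = C" if "C \<in> W" for C using R[OF that] unfolding ch_def by simp
  define P where "P C D \<longleftrightarrow> C \<inter> D = {} \<and>
      (\<forall>x \<le> min (A C $1) (A D $1). line_at (A C) (U C) x < line_at (A D) (U D) x)" for C D
  have "edge_order W disjointness_adj P"
    unfolding edge_order_def
  proof (intro conjI irreflp_onI transp_onI ballI impI)
    fix C assume "C \<in> W"
    have "A C \<in> ch C" unfolding ch_def using base_in_half_line chain_subsets(1) by blast
    then show "\<not> P C C" unfolding P_def ch[OF \<open>C \<in> W\<close>] by blast
  next
    fix C D E assume CDE: "C \<in> W" "D \<in> W" "E \<in> W" and "P C D" "P D E"
    then have dj: "ch C \<inter> ch D = {}" "ch D \<inter> ch E = {}" unfolding P_def by (simp_all add: ch)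
    have u: "U C $1 < 0" "0 < V C $1" "U D $1 < 0" "0 < V D $1" "U E $1 < 0" "0 < V E $1"
      using R[OF CDE(1)] R[OF CDE(2)] R[OF CDE(3)] by simp_all
    have "\<forall>x \<le> min (A C $1) (A D $1). line_at (A C) (U C) x < line_at (A D) (U D) x"
      "\<forall>x \<le> min (A D $1) (A E $1). line_at (A D) (U D) x < line_at (A E) (U E) x"
      using \<open>P C D\<close> \<open>P D E\<close> unfolding P_def by simp_all
    from lr_chains_order_trans[OF u dj[unfolded ch_def] this]
    have "ch C \<inter> ch E = {} \<and>
        (\<forall>x \<le> min (A C $1) (A E $1). line_at (A C) (U C) x < line_at (A E) (U E) x)"
      unfolding ch_def .
    then show "P C E" unfolding P_def by (simp add: ch CDE)
  next
    fix C D assume "P C D"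
    then show "disjointness_adj C D" unfolding P_def disjointness_adj_def by simp
  qed
  moreover have "P C D \<or> P D C" if CD: "C \<in> W" "D \<in> W" "disjointness_adj C D" for C D
  proof -
    have "ch C \<inter> ch D = {}" using CD unfolding disjointness_adj_def by (simp add: ch)
    then have "(\<forall>x \<le> min (A C $1) (A D $1). line_at (A C) (U C) x < line_at (A D) (U D) x) \<or>
        (\<forall>x \<le> min (A D $1) (A C $1). line_at (A D) (U D) x < line_at (A C) (U C) x)"
      using left_rays_ordered[OF conjunct1[OF R[OF CD(1)]] conjunct1[OF R[OF CD(2)]]]
      unfolding ch_def by (metis min.commute)
    then show ?thesis using CD(3) unfolding P_def disjointness_adj_def by (auto simp: Int_commute)
  qed
  moreover have "symp (disjointness_adj :: (real^2) set \<Rightarrow> _)"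
    unfolding disjointness_adj_def by (auto intro: sympI)
  ultimately show ?thesis using proper_coloring_by_order[OF assms(1,2)] by blast
qed

lemma proper_coloring_lens_chains:
  assumes "finite F" and "W \<subseteq> F" and "\<forall>C\<in>W. \<exists>l. wf_lens l \<and> lens_set l = C"
  shows "\<exists>c. proper_coloring W disjointness_adj (clique_number F disjointness_adj ^ 3) c"
proof -
  obtain L where L: "\<forall>C\<in>W. wf_lens (L C) \<and> lens_set (L C) = C"
    using bchoice[OF assms(3)] by blast
  define P1 where "P1 C D \<longleftrightarrow> lens_below (L C) (L D) \<and> lens_precedes (L C) (L D)" for C D
  define P2 where "P2 C D \<longleftrightarrow> lens_below (L D) (L C) \<and> lens_precedes (L C) (L D)" for C D
  define P3 where "P3 C D \<longleftrightarrow> lens_nested (L C) (L D)" for C D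
  have adj: "disjointness_adj C D" if "C \<in> W" "D \<in> W" "lens_set (L C) \<inter> lens_set (L D) = {}"
    for C D using L that unfolding disjointness_adj_def by simp
  then have adj': "disjointness_adj C D" if "C \<in> W" "D \<in> W" "lens_set (L D) \<inter> lens_set (L C) = {}"
    for C D using that by (simp add: Int_commute)
  have o1: "edge_order W disjointness_adj P1"
    unfolding edge_order_def P1_def
    using lens_below_irrefl lens_below_trans lens_precedes_trans lens_below_disjoint adj
    by (auto intro!: irreflp_onI transp_onI)
  have o2: "edge_order W disjointness_adj P2"
    unfolding edge_order_def P2_def
    using lens_below_irrefl lens_below_trans' lens_precedes_trans lens_below_disjoint adj'
    by (auto intro!: irreflp_onI transp_onI)
  have o3: "edge_order W disjointness_adj P3"
    unfolding edge_order_def P3_def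
    using lens_nested_irrefl lens_nested_trans lens_nested_disjoint adj
    by (auto intro!: irreflp_onI transp_onI)
  have cover: "P1 C D \<or> P1 D C \<or> P2 C D \<or> P2 D C \<or> P3 C D \<or> P3 D C"
    if "C \<in> W" "D \<in> W" "C \<noteq> D" "disjointness_adj C D" for C D
    using disjoint_lenses_cases[of "L C" "L D"] L that lens_precedes_total[of "L C" "L D"]
    unfolding P1_def P2_def P3_def disjointness_adj_def by auto
  have "symp (disjointness_adj :: (real^2) set \<Rightarrow> _)"
    unfolding disjointness_adj_def by (auto intro: sympI)
  from proper_coloring_by_three_orders[OF assms(1,2) this o1 o2 o3 cover] show ?thesis .
qed

lemma proper_coloring_nonvertical_chains:
  assumes "finite F" and "\<forall>C\<in>F. nonvertical_chain C"
  shows "\<exists>c. proper_coloring F disjointness_adj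
    (clique_number F disjointness_adj ^ 3 + clique_number F disjointness_adj) c"
proof -
  let ?W = "{C \<in> F. \<not> lr_chain C}"
  have "?W \<subseteq> F" "\<forall>C\<in>?W. \<exists>l. wf_lens l \<and> lens_set l = C"
    using assms(2) nonvertical_chain_is_lens by auto
  then obtain c where
    c: "proper_coloring ?W disjointness_adj (clique_number F disjointness_adj ^ 3) c"
    using proper_coloring_lens_chains[OF assms(1)] by blast
  have "F - ?W \<subseteq> F" "\<forall>C\<in>F - ?W. lr_chain C" by auto
  then obtain c' where
    "proper_coloring (F - ?W) disjointness_adj (clique_number F disjointness_adj) c'"
    using proper_coloring_lr_chains[OF assms(1)] by blast
  from proper_coloring_Un[OF c this] show ?thesis by (intro exI)
qed

section \<open>Tilting the plane\<close>

text \<open>p \<mapsto> \<alpha> p + J p with J the rotation by a right angle: injective and linear for every \<alpha>,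
  and it tilts a given nonzero direction to a vertical one for only one value of \<alpha>.\<close>
definition tilt :: "real \<Rightarrow> real^2 \<Rightarrow> real^2" where
  "tilt \<alpha> p = vector [\<alpha> * p$1 + p$2, \<alpha> * p$2 - p$1]"

lemma tilt_nth_1: "tilt \<alpha> w $ 1 = \<alpha> * w$1 + w$2"
  unfolding tilt_def by simp

lemma linear_tilt: "linear (tilt \<alpha>)"
  by (rule linearI) (simp_all add: tilt_def vec2_eq_iff algebra_simps)

lemma inj_tilt: "inj (tilt \<alpha>)"
proof (rule injI)
  fix x y assume "tilt \<alpha> x = tilt \<alpha> y"
  then have "\<alpha> * x$1 + x$2 = \<alpha> * y$1 + y$2" "\<alpha> * x$2 - x$1 = \<alpha> * y$2 - y$1"
    unfolding tilt_def vec2_eq_iff by simp_all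
  then have "(x$1 - y$1) * (1 + \<alpha> * \<alpha>) = 0" "x$2 - y$2 = - \<alpha> * (x$1 - y$1)" by algebra+
  moreover have "1 + \<alpha> * \<alpha> \<noteq> 0" by (smt (verit) zero_le_square)
  ultimately show "x = y" unfolding vec2_eq_iff by simp
qed

lemma tilt_chain:
  "tilt \<alpha> ` chain a b u v = chain (tilt \<alpha> a) (tilt \<alpha> b) (tilt \<alpha> u) (tilt \<alpha> v)"
proof -
  have "half_line p w = (\<lambda>t. p + t *\<^sub>R w) ` {0..}" for p w
    unfolding half_line_def by auto
  then have "tilt \<alpha> ` half_line p w = half_line (tilt \<alpha> p) (tilt \<alpha> w)" for p w
    by (simp add: image_image linear_add[OF linear_tilt] linear_cmul[OF linear_tilt])
  then show ?thesis
    unfolding chain_def image_Un closed_segment_linear_image[OF linear_tilt] by simp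
qed

lemma exists_tilt_nonvertical:
  assumes "finite D" and "0 \<notin> D"
  shows "\<exists>\<alpha>. \<forall>w\<in>D. tilt \<alpha> w $ 1 \<noteq> 0"
proof -
  obtain \<alpha> :: real where \<alpha>: "\<alpha> \<notin> (\<lambda>w. - w$2 / w$1) ` D"
    using ex_new_if_finite[OF infinite_UNIV_char_0] assms(1) by blast
  have "tilt \<alpha> w $ 1 \<noteq> 0" if "w \<in> D" for w
  proof (cases "w$1 = 0")
    case True
    then have "w$2 \<noteq> 0" using assms(2) that vec2_eq_iff[of w 0] by auto
    then show ?thesis unfolding tilt_nth_1 using True by simp
  next
    case False
    have "\<alpha> \<noteq> - w$2 / w$1" using \<alpha> that by blast
    then have "\<alpha> * w$1 \<noteq> - w$2" using False by (simp add: field_simps)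
    then show ?thesis unfolding tilt_nth_1 by linarith
  qed
  then show ?thesis by blast
qed

lemma exists_tilt_nonvertical_chains:
  assumes "finite F" and "\<forall>C\<in>F. two_way_3chain C"
  shows "\<exists>\<alpha>. \<forall>C\<in>F. nonvertical_chain (tilt \<alpha> ` C)"
proof -
  obtain A B U V where R: "\<And>C. C \<in> F \<Longrightarrow>
      A C \<noteq> B C \<and> U C \<noteq> 0 \<and> V C \<noteq> 0 \<and> C = chain (A C) (B C) (U C) (V C)"
    using assms(2) unfolding two_way_3chain_def chain_def by metis
  let ?D = "U ` F \<union> V ` F \<union> (\<lambda>C. B C - A C) ` F"
  have nz: "U C \<noteq> 0 \<and> V C \<noteq> 0 \<and> B C - A C \<noteq> 0" if "C \<in> F" for C
  proof -
    have "A C \<noteq> B C" "U C \<noteq> 0" "V C \<noteq> 0" using R[OF that] by simp_all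
    then show ?thesis by (simp add: eq_commute[of "B C" "A C"])
  qed
  have "w \<noteq> 0" if "w \<in> ?D" for w
    using that nz by (elim UnE imageE) auto
  then have "0 \<notin> ?D" by blast
  moreover have "finite ?D" using assms(1) by simp
  ultimately obtain \<alpha> where \<alpha>: "\<forall>w\<in>?D. tilt \<alpha> w $ 1 \<noteq> 0"
    using exists_tilt_nonvertical[of ?D] by blast
  have "nonvertical_chain (tilt \<alpha> ` C)" if "C \<in> F" for C
  proof -
    have "tilt \<alpha> ` C = chain (tilt \<alpha> (A C)) (tilt \<alpha> (B C)) (tilt \<alpha> (U C)) (tilt \<alpha> (V C))"
      using R[OF that] tilt_chain by metis
    moreover have "tilt \<alpha> (A C) $ 1 \<noteq> tilt \<alpha> (B C) $ 1"
    proof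
      assume "tilt \<alpha> (A C) $ 1 = tilt \<alpha> (B C) $ 1"
      then have "tilt \<alpha> (B C - A C) $ 1 = 0"
        unfolding tilt_nth_1 vector_minus_component by algebra
      then show False using \<alpha> that by blast
    qed
    moreover have "tilt \<alpha> (U C) $ 1 \<noteq> 0" "tilt \<alpha> (V C) $ 1 \<noteq> 0" using \<alpha> that by auto
    ultimately show ?thesis unfolding nonvertical_chain_def by blast
  qed
  then show ?thesis by blast
qed

lemma disjointness_adj_inj_image:
  "inj f \<Longrightarrow> disjointness_adj (f ` A) (f ` B) \<longleftrightarrow> disjointness_adj A B"
  unfolding disjointness_adj_def by (simp add: image_Int[symmetric])

theorem theorem5:
  fixes F :: "(real^2) set set"
  assumes "finite F"
    and "\<forall>C\<in>F. two_way_3chain C"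
  shows "chromatic_number F disjointness_adj
           \<le> clique_number F disjointness_adj ^ 3 + clique_number F disjointness_adj"
proof -
  let ?\<omega> = "\<lambda>F. clique_number F disjointness_adj"
  obtain \<alpha> where nonvertical: "\<forall>C\<in>F. nonvertical_chain (tilt \<alpha> ` C)"
    using exists_tilt_nonvertical_chains[OF assms] by blast
  define G where "G = image (tilt \<alpha>)"
  have inj: "inj_on G F" unfolding G_def inj_on_def using inj_image_eq_iff[OF inj_tilt] by blast
  have adj: "disjointness_adj (G C) (G D) \<longleftrightarrow> disjointness_adj C D" for C D
    unfolding G_def using disjointness_adj_inj_image[OF inj_tilt] .
  have "finite (G ` F)" "\<forall>C\<in>G ` F. nonvertical_chain C"
    using assms(1) nonvertical unfolding G_def by auto
  then obtain c where "proper_coloring (G ` F) disjointness_adj (?\<omega> (G ` F) ^ 3 + ?\<omega> (G ` F)) c"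
    by (blast dest: proper_coloring_nonvertical_chains)
  moreover have "?\<omega> (G ` F) \<le> ?\<omega> F"
    by (rule clique_number_image_le[OF assms(1) inj]) (simp add: adj)
  then have "?\<omega> (G ` F) ^ 3 + ?\<omega> (G ` F) \<le> ?\<omega> F ^ 3 + ?\<omega> F"
    by (intro add_mono power_mono) simp_all
  ultimately have "proper_coloring (G ` F) disjointness_adj (?\<omega> F ^ 3 + ?\<omega> F) c"
    by (rule proper_coloring_mono)
  then have "proper_coloring F disjointness_adj (?\<omega> F ^ 3 + ?\<omega> F) (c \<circ> G)"
    by (rule proper_coloring_pullback[OF _ inj]) (simp add: adj)
  then show ?thesis by (rule chromatic_number_le)
qed

end
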